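(* Let $a,\Theta$ be finitely supported complex sequences on $\mathbb Z$ with $\Theta^\star=\Theta$, and let $b_1,b_2$ be finitely supported complex sequences such that $\{a;b_1,b_2\}_{\Theta,(1,-1)}$ is a quasi-tight framelet filter bank and $$\mathrm{S}\Theta(z)=1,\quad \mathrm{S}a(z)=\epsilon z^c,\quad \mathrm{S}b_1(z)=\epsilon_1z^{c_1},\quad \mathrm{S}b_2(z)=\epsilon_2z^{c_2}$$ for some $\epsilon,\epsilon_1,\epsilon_2\in\{\pm1\}$ and $c,c_1,c_2\in\mathbb Z$. Then $c_1+c$ and $c_2+c$ are even.
   Context: Finitely supported sequences $u$ on $\mathbb Z$ are identified with Laurent polynomials $u(z)=\sum_ku(k)z^k$; $u^\star(z):=\sum_k\overline{u(k)}z^{-k}$. $u$ has symmetry of type $\epsilon z^c$ if $u(z)=\epsilon z^cu(z^{-1})$; for nonzero $u$, $\mathrm{S}u(z):=u(z)/u(z^{-1})$; zero has every type. $\{a;b_1,b_2\}_{\Theta,(1,-1)}$ is a quasi-tight framelet filter bank if for all $z\in\mathbb C\setminus\{0\}$: $\Theta(z^2)a^\star(z)a(z)+b_1^\star(z)b_1(z)-b_2^\star(z)b_2(z)=\Theta(z)$ and $\Theta(z^2)a^\star(z)a(-z)+b_1^\star(z)b_1(-z)-b_2^\star(z)b_2(-z)=0$. *)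

theory Defs
  imports Complex_Main
begin

text \<open>Finitely supported sequences on the integers, identified with Laurent polynomials.\<close>

definition fin_supp :: "(int \<Rightarrow> complex) \<Rightarrow> bool" where
  "fin_supp u \<longleftrightarrow> finite {k. u k \<noteq> 0}"

definition lp_eval :: "(int \<Rightarrow> complex) \<Rightarrow> complex \<Rightarrow> complex" where
  "lp_eval u z = (\<Sum>k\<in>{k. u k \<noteq> 0}. u k * z powi k)"

text \<open>u^star(z) = sum_k conj(u(k)) z^(-k), i.e. the sequence k maps to conj(u(-k)).\<close>
definition lp_star :: "(int \<Rightarrow> complex) \<Rightarrow> (int \<Rightarrow> complex)" where
  "lp_star u = (\<lambda>k. cnj (u (- k)))"

text \<open>Su(z) = eps z^c, for nonzero u: u(z)/u(1/z) = eps z^c as rational functions,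
  i.e. u(z) = eps z^c u(1/z) for all nonzero z.\<close>
definition S_eq :: "(int \<Rightarrow> complex) \<Rightarrow> complex \<Rightarrow> int \<Rightarrow> bool" where
  "S_eq u eps c \<longleftrightarrow> u \<noteq> (\<lambda>_. 0) \<and>
     (\<forall>z. z \<noteq> 0 \<longrightarrow> lp_eval u z = eps * z powi c * lp_eval u (inverse z))"

definition quasi_tight_fb ::
  "(int \<Rightarrow> complex) \<Rightarrow> (int \<Rightarrow> complex) \<Rightarrow> (int \<Rightarrow> complex) \<Rightarrow> (int \<Rightarrow> complex) \<Rightarrow> bool" where
  "quasi_tight_fb \<Theta> a b1 b2 \<longleftrightarrow>
     (\<forall>z::complex. z \<noteq> 0 \<longrightarrow>
        lp_eval \<Theta> (z^2) * lp_eval (lp_star a) z * lp_eval a z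
        + lp_eval (lp_star b1) z * lp_eval b1 z
        - lp_eval (lp_star b2) z * lp_eval b2 z = lp_eval \<Theta> z
      \<and> lp_eval \<Theta> (z^2) * lp_eval (lp_star a) z * lp_eval a (- z)
        + lp_eval (lp_star b1) z * lp_eval b1 (- z)
        - lp_eval (lp_star b2) z * lp_eval b2 (- z) = 0)"

end

theory Submission
  imports Defs "HOL-Computational_Algebra.Polynomial"
begin

text \<open>Write \<open>A u z = u\<^sup>\<star>(z) u(-z)\<close>. If \<open>u\<close> has symmetry type \<open>\<epsilon> z\<^sup>c\<close> with
  \<open>\<epsilon> = \<plusminus>1\<close>, then \<open>A u (1/z) = (-1)\<^sup>c A u z\<close>; moreover \<open>\<Theta>(1/z\<^sup>2) = \<Theta>(z\<^sup>2)\<close>.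
  So the second filter bank identity, taken at \<open>z\<close> and at \<open>1/z\<close>, yields
  \<open>T\<^sub>0 + T\<^sub>1 - T\<^sub>2 = 0\<close> and \<open>s T\<^sub>0 + s\<^sub>1 T\<^sub>1 - s\<^sub>2 T\<^sub>2 = 0\<close>, where
  \<open>T\<^sub>0 = \<Theta>(z\<^sup>2) A a z\<close>, \<open>T\<^sub>j = A b\<^sub>j z\<close>, \<open>s = (-1)\<^sup>c\<close>, \<open>s\<^sub>j = (-1)\<^sup>c\<^sup>j\<close>.
  Away from the finitely many zeros of these Laurent polynomials all \<open>T\<^sub>i\<close> are nonzero,
  and then the two relations force \<open>s\<^sub>1 = s\<^sub>2 = s\<close>.\<close>

definition alias_prod :: "(int \<Rightarrow> complex) \<Rightarrow> complex \<Rightarrow> complex" where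
  "alias_prod u z = lp_eval (lp_star u) z * lp_eval u (- z)"

lemma lp_eval_times_power_eq_poly:
  assumes "fin_supp u" "u \<noteq> (\<lambda>_. 0)"
  obtains p :: "complex poly" and N :: nat
  where "p \<noteq> 0" "\<And>z. z \<noteq> 0 \<Longrightarrow> poly p z = z ^ N * lp_eval u z"
proof -
  define S where "S = {k. u k \<noteq> 0}"
  have "finite S" using assms(1) unfolding fin_supp_def S_def .
  define N where "N = (\<Sum>k\<in>S. nat \<bar>k\<bar>)"
  have shift_nonneg: "k + int N \<ge> 0" if "k \<in> S" for k
  proof -
    have "nat \<bar>k\<bar> \<le> N" unfolding N_def using \<open>finite S\<close> that by (intro member_le_sum) auto
    then show ?thesis by linarith
  qed
  define p where "p = (\<Sum>k\<in>S. monom (u k) (nat (k + int N)))"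
  obtain k0 where "u k0 \<noteq> 0" using assms(2) by blast
  then have "k0 \<in> S" by (simp add: S_def)
  have "coeff p (nat (k0 + int N))
      = (\<Sum>k\<in>S. if nat (k + int N) = nat (k0 + int N) then u k else 0)"
    unfolding p_def by (simp add: coeff_sum)
  also have "\<dots> = (\<Sum>k\<in>S. if k = k0 then u k else 0)"
    using shift_nonneg \<open>k0 \<in> S\<close> by (intro sum.cong refl) (simp add: eq_nat_nat_iff)
  also have "\<dots> = u k0" using \<open>finite S\<close> \<open>k0 \<in> S\<close> by simp
  finally have "p \<noteq> 0" using \<open>u k0 \<noteq> 0\<close> by auto
  moreover have "poly p z = z ^ N * lp_eval u z" if "z \<noteq> 0" for z
  proof -
    have "z ^ nat (k + int N) = z ^ N * z powi k" if "k \<in> S" for k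
    proof -
      have "z ^ nat (k + int N) = z powi (k + int N)"
        using shift_nonneg[OF that] by (simp add: power_int_def)
      also have "\<dots> = z ^ N * z powi k" using \<open>z \<noteq> 0\<close> by (simp add: power_int_add)
      finally show ?thesis .
    qed
    then show ?thesis
      unfolding p_def lp_eval_def S_def[symmetric] poly_sum poly_monom sum_distrib_left
      by (intro sum.cong) auto
  qed
  ultimately show ?thesis using that by blast
qed

lemma finite_lp_eval_zeros:
  assumes "fin_supp u" "u \<noteq> (\<lambda>_. 0)"
  shows "finite {z. lp_eval u z = 0}"
proof -
  obtain p N where "p \<noteq> 0" and p: "\<And>z. z \<noteq> 0 \<Longrightarrow> poly p z = z ^ N * lp_eval u z"
    using lp_eval_times_power_eq_poly[OF assms] by blast
  have "{z. lp_eval u z = 0} \<subseteq> insert 0 {z. poly p z = 0}" using p by auto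
  then show ?thesis using poly_roots_finite[OF \<open>p \<noteq> 0\<close>] finite_subset by blast
qed

lemma finite_vimage_power2:
  assumes "finite A"
  shows "finite ((\<lambda>z::complex. z ^ 2) -` A)"
proof -
  have "(\<lambda>z::complex. z ^ 2) -` A = (\<Union>w\<in>A. {z. z ^ 2 = w})" by auto
  then show ?thesis using assms by (auto intro: finite_nth_roots)
qed

lemma lp_star_support: "{k. lp_star u k \<noteq> 0} = uminus ` {k. u k \<noteq> 0}"
  unfolding lp_star_def by (auto simp: image_iff) (metis minus_minus)

lemma fin_supp_lp_star: "fin_supp u \<Longrightarrow> fin_supp (lp_star u)"
  unfolding fin_supp_def lp_star_support by simp

lemma lp_star_nonzero: "u \<noteq> (\<lambda>_. 0) \<Longrightarrow> lp_star u \<noteq> (\<lambda>_. 0)"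
  using lp_star_support[of u] by auto

lemma lp_eval_lp_star: "lp_eval (lp_star u) z = cnj (lp_eval u (cnj (inverse z)))"
proof -
  have "lp_eval (lp_star u) z = (\<Sum>k\<in>{k. u k \<noteq> 0}. lp_star u (- k) * z powi (- k))"
    unfolding lp_eval_def lp_star_support by (subst sum.reindex) (auto intro: inj_onI)
  also have "\<dots> = (\<Sum>k\<in>{k. u k \<noteq> 0}. cnj (u k * cnj (inverse z) powi k))"
    unfolding lp_star_def by (simp add: power_int_minus power_int_inverse)
  finally show ?thesis unfolding lp_eval_def by simp
qed

lemma S_eqD:
  "S_eq u e c \<Longrightarrow> z \<noteq> 0 \<Longrightarrow> lp_eval u z = e * z powi c * lp_eval u (inverse z)"
  unfolding S_eq_def by blast

lemma S_eq_lp_star: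
  assumes "S_eq u e c"
  shows "S_eq (lp_star u) (cnj e) (- c)"
  unfolding S_eq_def
proof (intro conjI allI impI)
  show "lp_star u \<noteq> (\<lambda>_. 0)" using assms lp_star_nonzero unfolding S_eq_def by blast
next
  fix z :: complex
  assume "z \<noteq> 0"
  have "lp_eval u (cnj (inverse z))
      = e * cnj (inverse z) powi c * lp_eval u (inverse (cnj (inverse z)))"
    using \<open>z \<noteq> 0\<close> by (intro S_eqD[OF assms]) simp
  also have "inverse (cnj (inverse z)) = cnj z" by (simp add: complex_cnj_inverse)
  finally have "lp_eval u (cnj (inverse z)) = e * cnj (inverse z) powi c * lp_eval u (cnj z)" .
  then have "lp_eval (lp_star u) z = cnj e * inverse z powi c * cnj (lp_eval u (cnj z))"
    by (simp add: lp_eval_lp_star)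
  then show "lp_eval (lp_star u) z = cnj e * z powi (- c) * lp_eval (lp_star u) (inverse z)"
    by (simp add: lp_eval_lp_star power_int_minus power_int_inverse)
qed

lemma alias_prod_inverse:
  assumes "S_eq u e c" "cnj e * e = 1" "z \<noteq> 0"
  shows "alias_prod u (inverse z) = (-1) powi c * alias_prod u z"
proof -
  have "lp_eval (lp_star u) (inverse z)
      = cnj e * inverse z powi (- c) * lp_eval (lp_star u) (inverse (inverse z))"
    using assms(3) by (intro S_eqD[OF S_eq_lp_star[OF assms(1)]]) simp
  then have star: "lp_eval (lp_star u) (inverse z) = cnj e * z powi c * lp_eval (lp_star u) z"
    by (simp add: power_int_minus power_int_inverse)
  have "lp_eval u (- inverse z) = e * (- inverse z) powi c * lp_eval u (inverse (- inverse z))"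
    using assms(3) by (intro S_eqD[OF assms(1)]) simp
  also have "inverse (- inverse z) = - z" by simp
  also have "(- inverse z) powi c = (-1) powi c * inverse (z powi c)"
    by (metis mult_minus1 power_int_mult_distrib power_int_inverse)
  finally have refl: "lp_eval u (- inverse z) = e * (-1) powi c * inverse (z powi c) * lp_eval u (- z)"
    by (simp only: mult.assoc)
  have "alias_prod u (inverse z)
      = (cnj e * e) * (-1) powi c * (z powi c * inverse (z powi c)) * alias_prod u z"
    unfolding alias_prod_def star refl by (simp add: ac_simps)
  then show ?thesis using assms(2,3) by simp
qed

lemma finite_alias_prod_zeros:
  assumes "fin_supp u" "u \<noteq> (\<lambda>_. 0)"
  shows "finite {z. alias_prod u z = 0}"
proof -
  have "{z. alias_prod u z = 0} = {z. lp_eval (lp_star u) z = 0} \<union> uminus -` {z. lp_eval u z = 0}"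
    unfolding alias_prod_def by auto
  moreover have "finite {z. lp_eval (lp_star u) z = 0}"
    using assms by (intro finite_lp_eval_zeros fin_supp_lp_star lp_star_nonzero)
  moreover have "finite (uminus -` {z. lp_eval u z = 0})"
    using finite_lp_eval_zeros[OF assms] by (rule finite_vimageI) (simp add: inj_def)
  ultimately show ?thesis by simp
qed

lemma quasi_tight_fb_alias_prod:
  assumes "quasi_tight_fb \<Theta> a b1 b2" "z \<noteq> 0"
  shows "lp_eval \<Theta> (z ^ 2) * alias_prod a z + alias_prod b1 z - alias_prod b2 z = 0"
  using assms unfolding quasi_tight_fb_def alias_prod_def by (simp add: mult.assoc)

lemma S_eq_1_0_lp_eval_inverse:
  "S_eq \<Theta> 1 0 \<Longrightarrow> w \<noteq> 0 \<Longrightarrow> lp_eval \<Theta> (inverse w) = lp_eval \<Theta> w"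
  using S_eqD[of \<Theta> 1 0 w] by simp

lemma quasi_tight_fb_alias_prod_reflected:
  assumes "quasi_tight_fb \<Theta> a b1 b2" "S_eq \<Theta> 1 0"
    and "S_eq a e c" "S_eq b1 e1 c1" "S_eq b2 e2 c2"
    and "cnj e * e = 1" "cnj e1 * e1 = 1" "cnj e2 * e2 = 1" "z \<noteq> 0"
  shows "(-1) powi c * (lp_eval \<Theta> (z ^ 2) * alias_prod a z)
      + (-1) powi c1 * alias_prod b1 z - (-1) powi c2 * alias_prod b2 z = 0"
proof -
  have "lp_eval \<Theta> (inverse z ^ 2) * alias_prod a (inverse z)
      + alias_prod b1 (inverse z) - alias_prod b2 (inverse z) = 0"
    using assms(1,9) by (intro quasi_tight_fb_alias_prod) simp_all
  moreover have "lp_eval \<Theta> (inverse z ^ 2) = lp_eval \<Theta> (z ^ 2)"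
    using S_eq_1_0_lp_eval_inverse[OF assms(2), of "z ^ 2"] assms(9) by (simp add: power_inverse)
  ultimately show ?thesis
    using alias_prod_inverse[OF assms(3) assms(6) assms(9)]
      alias_prod_inverse[OF assms(4) assms(7) assms(9)]
      alias_prod_inverse[OF assms(5) assms(8) assms(9)]
    by (simp only: ac_simps)
qed

lemma ex_alias_prod_nonzero:
  assumes "fin_supp \<Theta>" "fin_supp a" "fin_supp b1" "fin_supp b2"
    and "\<Theta> \<noteq> (\<lambda>_. 0)" "a \<noteq> (\<lambda>_. 0)" "b1 \<noteq> (\<lambda>_. 0)" "b2 \<noteq> (\<lambda>_. 0)"
  obtains z where "z \<noteq> 0" "lp_eval \<Theta> (z ^ 2) \<noteq> 0"
    "alias_prod a z \<noteq> 0" "alias_prod b1 z \<noteq> 0" "alias_prod b2 z \<noteq> 0"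
proof -
  define bad where "bad = insert 0 ((\<lambda>z. z ^ 2) -` {w. lp_eval \<Theta> w = 0}
    \<union> {z. alias_prod a z = 0} \<union> {z. alias_prod b1 z = 0} \<union> {z. alias_prod b2 z = 0})"
  have "finite bad"
    unfolding bad_def
    using finite_vimage_power2[OF finite_lp_eval_zeros[OF assms(1,5)]]
      finite_alias_prod_zeros[OF assms(2,6)] finite_alias_prod_zeros[OF assms(3,7)]
      finite_alias_prod_zeros[OF assms(4,8)]
    by simp
  then obtain z where "z \<notin> bad" using ex_new_if_finite[OF infinite_UNIV_char_0] by blast
  then show ?thesis using that unfolding bad_def by auto
qed

lemma minus_one_powi_eq_iff:
  "((-1 :: 'a :: field_char_0) powi m = (-1) powi n) \<longleftrightarrow> even (m + n)"
  by (auto simp: power_int_minus_left)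

lemma signs_agree_if_two_relations:
  fixes s s1 s2 T0 T1 T2 :: "'a :: field_char_0"
  assumes "s \<in> {1, -1}" "s1 \<in> {1, -1}" "s2 \<in> {1, -1}"
    and "T0 + T1 - T2 = 0" "s * T0 + s1 * T1 - s2 * T2 = 0"
    and "T0 \<noteq> 0" "T1 \<noteq> 0" "T2 \<noteq> 0"
  shows "s1 = s \<and> s2 = s"
proof -
  have "(s1 - s) * T1 - (s2 - s) * T2 = (s * T0 + s1 * T1 - s2 * T2) - s * (T0 + T1 - T2)"
    by (simp add: algebra_simps)
  then have diff: "(s1 - s) * T1 = (s2 - s) * T2"
    using assms(4,5) by simp
  show ?thesis
  proof (cases "s1 = s")
    case True
    then show ?thesis using diff assms(8) by simp
  next
    case False
    then have "s2 \<noteq> s" using diff assms(7) by auto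
    with False have "s1 = - s" "s2 = - s" using assms(1-3) by auto
    then have "T1 = T2" using diff assms(1) by auto
    then show ?thesis using assms(4,6) by simp
  qed
qed

theorem theorem4p2:
  fixes a \<Theta> b1 b2 :: "int \<Rightarrow> complex"
    and eps eps1 eps2 :: complex and c c1 c2 :: int
  assumes "fin_supp a" and "fin_supp \<Theta>" and "fin_supp b1" and "fin_supp b2"
    and "lp_star \<Theta> = \<Theta>"
    and "quasi_tight_fb \<Theta> a b1 b2"
    and "S_eq \<Theta> 1 0"
    and "S_eq a eps c" and "S_eq b1 eps1 c1" and "S_eq b2 eps2 c2"
    and "eps \<in> {1, -1}" and "eps1 \<in> {1, -1}" and "eps2 \<in> {1, -1}"
  shows "even (c1 + c) \<and> even (c2 + c)"
proof -
  have "\<Theta> \<noteq> (\<lambda>_. 0)" "a \<noteq> (\<lambda>_. 0)" "b1 \<noteq> (\<lambda>_. 0)" "b2 \<noteq> (\<lambda>_. 0)"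
    using assms(7-10) unfolding S_eq_def by auto
  then obtain z where "z \<noteq> 0" "lp_eval \<Theta> (z ^ 2) \<noteq> 0"
    and alias_nonzero: "alias_prod a z \<noteq> 0" "alias_prod b1 z \<noteq> 0" "alias_prod b2 z \<noteq> 0"
    using ex_alias_prod_nonzero assms(1-4) by metis
  have "cnj eps * eps = 1" "cnj eps1 * eps1 = 1" "cnj eps2 * eps2 = 1"
    using assms(11-13) by auto
  then have at_inverse: "(-1) powi c * (lp_eval \<Theta> (z ^ 2) * alias_prod a z)
      + (-1) powi c1 * alias_prod b1 z - (-1) powi c2 * alias_prod b2 z = 0"
    using quasi_tight_fb_alias_prod_reflected assms(6-10) \<open>z \<noteq> 0\<close> by blast
  have sign: "(-1 :: complex) powi k \<in> {1, -1}" for k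
    by (simp add: power_int_minus_left)
  have "(-1 :: complex) powi c1 = (-1) powi c \<and> (-1 :: complex) powi c2 = (-1) powi c"
    using \<open>lp_eval \<Theta> (z ^ 2) \<noteq> 0\<close> alias_nonzero
    by (intro signs_agree_if_two_relations[OF sign sign sign
          quasi_tight_fb_alias_prod[OF assms(6) \<open>z \<noteq> 0\<close>] at_inverse]) simp_all
  then show ?thesis by (simp add: minus_one_powi_eq_iff)
qed

end
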